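(* Let $\mu,\lambda$ be positive integers with $\lambda\ge e\mu$. Let $(X_t)_{t\ge0}$ be a random process with deterministic initial value $X_0\in\{1,\dots,\mu\}$ such that for every $t\ge1$, conditionally on $X_0,\dots,X_{t-1}$, $X_t$ has the law of $\min\{\mu,B\}$ with $B\sim\mathrm{Bin}(\lambda,\frac{X_{t-1}}{e\mu})$. Then for all $t\in\mathbb{N}$ and all $\Delta>0$, \[\Pr\big[\exists\,\tau\in\{1,\dots,t\}:\ X_\tau<X_0-\Delta\big]\le\frac{tX_0}{\Delta^2}.\]
   Context: $\mathrm{Bin}(m,p)$ denotes the binomial distribution with $m$ trials and success probability $p$. *)

theory Defs
  imports "HOL-Probability.Probability"
begin

definition step_law :: "nat \<Rightarrow> nat \<Rightarrow> nat \<Rightarrow> nat pmf" where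
  "step_law mu lam x =
     map_pmf (\<lambda>b. min mu b) (binomial_pmf lam (real x / (exp 1 * real mu)))"

end

theory Submission
  imports Defs
begin

text \<open>The squared shortfall q y = (max 0 (x0 - y))^2 of the process below its start grows in
  expectation by at most x0 per step. From state x the next value is a clipped binomial with
  mean m \<ge> x. If m \<le> x0, the shortfall is at most the squared distance to x0, whose expectation
  is (x0 - m)^2 \<le> q x plus the variance m (1 - p) \<le> x0; if m > x0, the shortfall is at most
  x0 / m times the distance to m, so its expectation is at most (x0 / m)^2 m \<le> x0. Going below
  x0 - \<Delta> forces q \<ge> \<Delta>^2, and the argument behind Markov's inequality for supermartingales,
  run backwards in time over the cylinder sets of the process, bounds the probability of this
  happening within t steps by t x0 / \<Delta>^2.\<close>

section \<open>Moments of the binomial distribution\<close>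

lemma expectation_binomial_pmf_real:
  assumes "p \<in> {0..1}"
  shows "measure_pmf.expectation (binomial_pmf n p) f
           = (\<Sum>k\<le>n. f k * (real (n choose k) * p ^ k * (1 - p) ^ (n - k)))"
  using expectation_binomial_pmf'[OF assms, of n f] by (simp add: mult.commute)

lemma binomial_weight_Suc:
  fixes p q :: real
  shows "real (Suc k) * (real (Suc m choose Suc k) * p ^ Suc k * q)
           = real (Suc m) * p * (real (m choose k) * p ^ k * q)"
proof -
  have "real (Suc k) * real (Suc m choose Suc k) = real (Suc m) * real (m choose k)"
    using Suc_times_binomial[of k m] by (metis of_nat_mult)
  then show ?thesis
    by (metis (no_types, lifting) mult.assoc mult.left_commute power_Suc)
qed

lemma expectation_binomial_pmf_mean:
  assumes "p \<in> {0..1}"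
  shows "measure_pmf.expectation (binomial_pmf n p) real = real n * p"
proof (cases n)
  case 0
  then show ?thesis using assms by (simp add: binomial_pmf_0)
next
  case (Suc m)
  have "(\<Sum>k\<le>Suc m. real k * (real (Suc m choose k) * p ^ k * (1 - p) ^ (Suc m - k)))
      = (\<Sum>k\<le>m. real (Suc k) * (real (Suc m choose Suc k) * p ^ Suc k * (1 - p) ^ (m - k)))"
    by (subst sum.atMost_Suc_shift) (simp del: of_nat_Suc)
  also have "\<dots> = real (Suc m) * p * (\<Sum>k\<le>m. real (m choose k) * p ^ k * (1 - p) ^ (m - k))"
    by (simp only: binomial_weight_Suc sum_distrib_left)
  also have "\<dots> = real (Suc m) * p"
    using binomial_ring[of p "1 - p" m] by simp
  finally show ?thesis
    using Suc by (simp only: expectation_binomial_pmf_real[OF assms])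
qed

lemma expectation_binomial_pmf_factorial_moment:
  assumes "p \<in> {0..1}"
  shows "measure_pmf.expectation (binomial_pmf n p) (\<lambda>k. real k * (real k - 1))
           = real n * (real n - 1) * p\<^sup>2"
proof (cases n)
  case 0
  then show ?thesis using assms by (simp add: binomial_pmf_0)
next
  case (Suc m)
  have shift: "real (Suc k) * (real (Suc k) - 1) * c = real k * (real (Suc k) * c)" for k c
    by (simp add: algebra_simps)
  have "(\<Sum>k\<le>Suc m. real k * (real k - 1) * (real (Suc m choose k) * p ^ k * (1 - p) ^ (Suc m - k)))
      = (\<Sum>k\<le>m. real k * (real (Suc k) * (real (Suc m choose Suc k) * p ^ Suc k * (1 - p) ^ (m - k))))"
    by (subst sum.atMost_Suc_shift) (simp del: of_nat_Suc add: shift)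
  also have "\<dots> = real (Suc m) * p * (\<Sum>k\<le>m. real k * (real (m choose k) * p ^ k * (1 - p) ^ (m - k)))"
    by (simp only: binomial_weight_Suc sum_distrib_left mult.left_commute)
  also have "\<dots> = real (Suc m) * p * (real m * p)"
    using expectation_binomial_pmf_mean[OF assms, of m]
    by (simp only: expectation_binomial_pmf_real[OF assms])
  finally show ?thesis
    using Suc by (simp add: expectation_binomial_pmf_real[OF assms] power2_eq_square mult_ac)
qed

lemma expectation_binomial_pmf_square_deviation:
  assumes "p \<in> {0..1}"
  shows "measure_pmf.expectation (binomial_pmf n p) (\<lambda>k. (a - real k)\<^sup>2)
           = (a - real n * p)\<^sup>2 + real n * p * (1 - p)"
proof -
  define w where "w k = real (n choose k) * p ^ k * (1 - p) ^ (n - k)" for k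
  have s0: "(\<Sum>k\<le>n. w k) = 1"
    unfolding w_def using binomial_ring[of p "1 - p" n] by simp
  have s1: "(\<Sum>k\<le>n. real k * w k) = real n * p"
    using expectation_binomial_pmf_mean[OF assms, of n]
    unfolding w_def expectation_binomial_pmf_real[OF assms] .
  have s2: "(\<Sum>k\<le>n. real k * (real k - 1) * w k) = real n * (real n - 1) * p\<^sup>2"
    using expectation_binomial_pmf_factorial_moment[OF assms, of n]
    unfolding w_def expectation_binomial_pmf_real[OF assms] .
  have "(a - real k)\<^sup>2 * w k
      = a\<^sup>2 * w k - 2 * a * (real k * w k) + real k * (real k - 1) * w k + real k * w k" for k
    by (simp add: power2_eq_square algebra_simps)
  then have "(\<Sum>k\<le>n. (a - real k)\<^sup>2 * w k)
      = a\<^sup>2 * (\<Sum>k\<le>n. w k) - 2 * a * (\<Sum>k\<le>n. real k * w k)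
        + (\<Sum>k\<le>n. real k * (real k - 1) * w k) + (\<Sum>k\<le>n. real k * w k)"
    by (simp only: sum.distrib sum_subtractf sum_distrib_left)
  also have "\<dots> = (a - real n * p)\<^sup>2 + real n * p * (1 - p)"
    unfolding s0 s1 s2 by (simp add: power2_eq_square algebra_simps)
  finally show ?thesis
    unfolding expectation_binomial_pmf_real[OF assms] w_def .
qed

lemma max_0_diff_square_le_scaled:
  fixes a m k :: real
  assumes "0 < a" "a < m" "0 \<le> k"
  shows "(max 0 (a - k))\<^sup>2 \<le> (a / m)\<^sup>2 * (m - k)\<^sup>2"
proof (cases "a \<le> k")
  case False
  have "a * k \<le> m * k"
    using assms by (intro mult_right_mono) auto
  then have "a - k \<le> a / m * (m - k)"
    using assms by (simp add: field_simps)
  then have "(a - k)\<^sup>2 \<le> (a / m * (m - k))\<^sup>2"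
    using False by (intro power_mono) auto
  also have "\<dots> = (a / m)\<^sup>2 * (m - k)\<^sup>2"
    by (rule power_mult_distrib)
  finally show ?thesis
    using False by simp
qed simp

lemma expectation_binomial_pmf_shortfall_square_le:
  fixes a x :: real
  assumes p: "p \<in> {0..1}" and "0 < a" and x_le_mean: "x \<le> real n * p"
  shows "measure_pmf.expectation (binomial_pmf n p) (\<lambda>k. (max 0 (a - real k))\<^sup>2)
           \<le> (max 0 (a - x))\<^sup>2 + a"
proof -
  let ?E = "measure_pmf.expectation (binomial_pmf n p)"
  define m where "m = real n * p"
  have "0 \<le> m"
    using p by (simp add: m_def)
  have variance_le_mean: "m * (1 - p) \<le> m"
    using \<open>0 \<le> m\<close> p by (simp add: mult_left_le)
  show ?thesis
  proof (cases "m \<le> a")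
    case True
    have "?E (\<lambda>k. (max 0 (a - real k))\<^sup>2) \<le> ?E (\<lambda>k. (a - real k)\<^sup>2)"
      using p by (intro integral_mono) (auto simp: max_def)
    also have "\<dots> = (a - m)\<^sup>2 + m * (1 - p)"
      unfolding m_def by (rule expectation_binomial_pmf_square_deviation[OF p])
    also have "(a - m)\<^sup>2 \<le> (max 0 (a - x))\<^sup>2"
      using True x_le_mean by (intro power_mono) (auto simp: m_def)
    finally show ?thesis
      using variance_le_mean True by linarith
  next
    case False
    then have "a < m" by simp
    have "?E (\<lambda>k. (max 0 (a - real k))\<^sup>2) \<le> ?E (\<lambda>k. (a / m)\<^sup>2 * (m - real k)\<^sup>2)"
      using p \<open>0 < a\<close> \<open>a < m\<close>
      by (intro integral_mono max_0_diff_square_le_scaled) auto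
    also have "\<dots> = (a / m)\<^sup>2 * m * (1 - p)"
      using expectation_binomial_pmf_square_deviation[OF p, where a = m] by (simp add: m_def)
    also have "\<dots> \<le> (a / m)\<^sup>2 * m"
      using variance_le_mean by (simp add: mult.assoc mult_left_mono)
    also have "\<dots> = a * (a / m)"
      using \<open>a < m\<close> \<open>0 < a\<close> by (simp add: power2_eq_square)
    also have "\<dots> \<le> a"
      using \<open>a < m\<close> \<open>0 < a\<close> by (intro mult_left_le) auto
    finally show ?thesis
      using zero_le_power2[of "max 0 (a - x)"] by linarith
  qed
qed

lemma set_pmf_step_law: "set_pmf (step_law mu lam x) \<subseteq> {..mu}"
  by (auto simp: step_law_def)

lemma expectation_step_law_shortfall_square_le:
  assumes "exp 1 * real mu \<le> real lam" and "x \<le> mu" and "0 < x0" and "x0 \<le> mu"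
  shows "measure_pmf.expectation (step_law mu lam x) (\<lambda>y. (max 0 (real x0 - real y))\<^sup>2)
           \<le> (max 0 (real x0 - real x))\<^sup>2 + real x0"
proof -
  define p where "p = real x / (exp 1 * real mu)"
  have "0 < exp 1 * real mu"
    using assms by simp
  have "1 \<le> exp (1 :: real)"
    by simp
  then have "real x \<le> exp 1 * real mu"
    using \<open>x \<le> mu\<close> mult_right_mono[of 1 "exp 1" "real mu"] by simp
  then have p: "p \<in> {0..1}"
    using \<open>0 < exp 1 * real mu\<close> by (simp add: p_def)
  have "real x * (exp 1 * real mu) \<le> real x * real lam"
    using assms(1) by (intro mult_left_mono) auto
  then have "real x \<le> real lam * p"
    using \<open>0 < exp 1 * real mu\<close> by (simp add: p_def le_divide_eq mult.commute)
  have clip: "(max 0 (real x0 - real (min mu k)))\<^sup>2 = (max 0 (real x0 - real k))\<^sup>2" for k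
    using \<open>x0 \<le> mu\<close> by (auto simp: min_def max_def)
  have "measure_pmf.expectation (step_law mu lam x) (\<lambda>y. (max 0 (real x0 - real y))\<^sup>2)
      = measure_pmf.expectation (binomial_pmf lam p) (\<lambda>k. (max 0 (real x0 - real k))\<^sup>2)"
    by (simp add: step_law_def p_def clip)
  also have "\<dots> \<le> (max 0 (real x0 - real x))\<^sup>2 + real x0"
    using p \<open>0 < x0\<close> \<open>real x \<le> real lam * p\<close>
    by (intro expectation_binomial_pmf_shortfall_square_le) auto
  finally show ?thesis .
qed

section \<open>A maximal inequality for chains with bounded drift\<close>

lemma sum_pmf_affine_potential_le:
  fixes q :: "'a \<Rightarrow> real"
  assumes "finite S" and "set_pmf p \<subseteq> S"
    and "measure_pmf.expectation p q \<le> q x + d" and "0 < h"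
  shows "(\<Sum>y\<in>S. pmf p y * ((c + q y) / h)) \<le> (c + d + q x) / h"
proof -
  have "(\<Sum>y\<in>S. pmf p y) = 1"
    using assms(1,2) by (rule sum_pmf_eq_1)
  moreover have "measure_pmf.expectation p q = (\<Sum>y\<in>S. q y * pmf p y)"
    using assms(1,2) by (intro integral_measure_pmf_real) auto
  moreover have "(\<Sum>y\<in>S. pmf p y * ((c + q y) / h))
      = (c * (\<Sum>y\<in>S. pmf p y) + (\<Sum>y\<in>S. q y * pmf p y)) / h"
    by (simp add: sum_divide_distrib[symmetric] sum_distrib_left sum.distrib algebra_simps)
  ultimately show ?thesis
    using assms(3,4) by (simp add: divide_right_mono)
qed

locale nat_markov_chain = prob_space M for M :: "'w measure" +
  fixes X :: "nat \<Rightarrow> 'w \<Rightarrow> nat" and K :: "nat \<Rightarrow> nat pmf"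
  assumes measurable_X: "\<And>s. X s \<in> measurable M (count_space UNIV)"
    and transition: "\<And>s xs y. 1 \<le> s \<Longrightarrow> length xs = s \<Longrightarrow>
        measure M {\<omega> \<in> space M. (\<forall>i<s. X i \<omega> = xs ! i) \<and> X s \<omega> = y}
        = measure M {\<omega> \<in> space M. \<forall>i<s. X i \<omega> = xs ! i} * pmf (K (xs ! (s - 1))) y"
begin

definition cylinder :: "nat list \<Rightarrow> 'w set" where
  "cylinder xs = {\<omega> \<in> space M. \<forall>i<length xs. X i \<omega> = xs ! i}"

lemma sets_X_Collect: "{\<omega> \<in> space M. P (X i \<omega>)} \<in> sets M"
proof -
  have "X i -` {y. P y} \<inter> space M \<in> sets M"
    using measurable_X by (rule measurable_sets) simp
  moreover have "X i -` {y. P y} \<inter> space M = {\<omega> \<in> space M. P (X i \<omega>)}"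
    by auto
  ultimately show ?thesis by simp
qed

lemma sets_cylinder: "cylinder xs \<in> sets M"
proof -
  have "cylinder xs = {\<omega> \<in> space M. \<forall>i\<in>{..<length xs}. X i \<omega> = xs ! i}"
    unfolding cylinder_def by auto
  also have "\<dots> \<in> sets M"
  proof (intro sets.sets_Collect_finite_All finite_lessThan)
    show "{\<omega> \<in> space M. X i \<omega> = xs ! i} \<in> sets M" for i
      using sets_X_Collect[of "\<lambda>v. v = xs ! i" i] by simp
  qed
  finally show ?thesis .
qed

lemma cylinder_snoc: "cylinder (xs @ [y]) = cylinder xs \<inter> {\<omega>. X (length xs) \<omega> = y}"
  unfolding cylinder_def by (fastforce simp: nth_append less_Suc_eq)

lemma measure_cylinder_snoc:
  assumes "xs \<noteq> []"
  shows "measure M (cylinder (xs @ [y])) = measure M (cylinder xs) * pmf (K (last xs)) y"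
proof -
  have "cylinder (xs @ [y])
      = {\<omega> \<in> space M. (\<forall>i<length xs. X i \<omega> = xs ! i) \<and> X (length xs) \<omega> = y}"
    by (simp add: cylinder_snoc) (auto simp: cylinder_def)
  then show ?thesis
    using transition[of "length xs" xs y] assms by (simp add: cylinder_def last_conv_nth Suc_le_eq)
qed

text \<open>Off the finite support S of the transition law, the next step is a null event, so every
  event inside a cylinder splits into finitely many one-step extensions.\<close>

lemma measure_cylinder_Int_eq_sum:
  assumes "xs \<noteq> []" and "finite S" and "set_pmf (K (last xs)) \<subseteq> S" and "A \<in> sets M"
  shows "measure M (cylinder xs \<inter> A) = (\<Sum>y\<in>S. measure M (cylinder (xs @ [y]) \<inter> A))"
proof -
  define N where "N = (\<Union>y\<in>-S. cylinder (xs @ [y]))"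
  have "N \<in> null_sets M"
    unfolding N_def
  proof (rule null_sets_UN')
    fix y assume "y \<in> -S"
    then have "pmf (K (last xs)) y = 0"
      using assms(3) by (auto simp: set_pmf_eq)
    then show "cylinder (xs @ [y]) \<in> null_sets M"
      using measure_cylinder_snoc[OF assms(1)] sets_cylinder
      by (simp add: emeasure_eq_measure null_setsI)
  qed simp
  have split: "cylinder xs \<inter> A = (\<Union>y\<in>S. cylinder (xs @ [y]) \<inter> A) \<union> (N \<inter> A)"
    unfolding N_def cylinder_snoc by auto
  have "(\<Union>y\<in>S. cylinder (xs @ [y]) \<inter> A) \<in> sets M"
    using assms(2,4) sets_cylinder by blast
  then have "measure M (cylinder xs \<inter> A) = measure M (\<Union>y\<in>S. cylinder (xs @ [y]) \<inter> A)"
    using \<open>N \<in> null_sets M\<close> assms(4)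
    by (subst split) (intro measure_Un_null_set null_set_Int2)
  also have "\<dots> = (\<Sum>y\<in>S. measure M (cylinder (xs @ [y]) \<inter> A))"
  proof (rule finite_measure_finite_Union)
    show "disjoint_family_on (\<lambda>y. cylinder (xs @ [y]) \<inter> A) S"
      by (auto simp: disjoint_family_on_def cylinder_snoc)
  qed (use assms(2,4) sets_cylinder in auto)
  finally show ?thesis .
qed

definition hits :: "nat set \<Rightarrow> nat set \<Rightarrow> 'w set" where
  "hits B T = {\<omega> \<in> space M. \<exists>\<tau>\<in>T. X \<tau> \<omega> \<in> B}"

lemma sets_hits: "finite T \<Longrightarrow> hits B T \<in> sets M"
  unfolding hits_def
  by (intro sets.sets_Collect_finite_Ex) (use sets_X_Collect[of "\<lambda>v. v \<in> B"] in auto)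

lemma cylinder_snoc_Int_hits:
  assumes "y \<notin> B"
  shows "cylinder (xs @ [y]) \<inter> hits B {length xs..<length xs + Suc s}
           = cylinder (xs @ [y]) \<inter> hits B {Suc (length xs)..<Suc (length xs) + s}"
proof -
  have "X (length xs) \<omega> \<notin> B" if "\<omega> \<in> cylinder (xs @ [y])" for \<omega>
    using that assms by (simp add: cylinder_snoc)
  moreover have "{length xs..<length xs + Suc s}
      = insert (length xs) {Suc (length xs)..<Suc (length xs) + s}"
    by auto
  ultimately show ?thesis
    unfolding hits_def by auto
qed

text \<open>The induction on the remaining horizon s works because (s d + q x) / h is at least 1 on B
  and its one-step expectation, by the drift bound, is at most its value with horizon s + 1.\<close>

lemma measure_cylinder_Int_hits_le:
  fixes q :: "nat \<Rightarrow> real"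
  assumes "finite S" and support: "\<And>x. x \<in> S \<Longrightarrow> set_pmf (K x) \<subseteq> S"
    and q_nonneg: "\<And>y. 0 \<le> q y"
    and drift: "\<And>x. x \<in> S \<Longrightarrow> measure_pmf.expectation (K x) q \<le> q x + d" and "0 \<le> d"
    and q_on_B: "\<And>y. y \<in> B \<Longrightarrow> h \<le> q y" and "0 < h"
    and "xs \<noteq> []" and "last xs \<in> S"
  shows "measure M (cylinder xs \<inter> hits B {length xs..<length xs + s})
           \<le> measure M (cylinder xs) * ((real s * d + q (last xs)) / h)"
  using \<open>xs \<noteq> []\<close> \<open>last xs \<in> S\<close>
proof (induction s arbitrary: xs)
  case 0
  then show ?case
    using q_nonneg \<open>0 < h\<close> by (simp add: hits_def)
next
  case (Suc s)
  define \<phi> where "\<phi> s y = (real s * d + q y) / h" for s y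
  define x where "x = last xs"
  have "x \<in> S"
    using Suc.prems(2) by (simp add: x_def)
  let ?H = "hits B {length xs..<length xs + Suc s}"
  have step: "measure M (cylinder (xs @ [y]) \<inter> ?H)
      \<le> measure M (cylinder xs) * pmf (K x) y * \<phi> s y" if "y \<in> S" for y
  proof (cases "y \<in> B")
    case True
    have "1 \<le> \<phi> s y"
      using q_on_B[OF True] \<open>0 < h\<close> \<open>0 \<le> d\<close> by (simp add: \<phi>_def field_simps add_increasing2)
    then have "measure M (cylinder (xs @ [y])) \<le> measure M (cylinder (xs @ [y])) * \<phi> s y"
      by (simp add: mult_le_cancel_left1)
    moreover have "measure M (cylinder (xs @ [y]) \<inter> ?H) \<le> measure M (cylinder (xs @ [y]))"
      using sets_cylinder by (intro finite_measure_mono) auto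
    ultimately show ?thesis
      using measure_cylinder_snoc[OF Suc.prems(1)] by (simp add: x_def)
  next
    case False
    have "measure M (cylinder (xs @ [y]) \<inter> ?H)
        = measure M (cylinder (xs @ [y]) \<inter> hits B {length (xs @ [y])..<length (xs @ [y]) + s})"
      using cylinder_snoc_Int_hits[OF False] by simp
    also have "\<dots> \<le> measure M (cylinder (xs @ [y])) * \<phi> s y"
      using Suc.IH[of "xs @ [y]"] \<open>y \<in> S\<close> by (simp add: \<phi>_def)
    finally show ?thesis
      using measure_cylinder_snoc[OF Suc.prems(1)] by (simp add: x_def)
  qed
  have expect: "(\<Sum>y\<in>S. pmf (K x) y * \<phi> s y) \<le> \<phi> (Suc s) x"
    using sum_pmf_affine_potential_le[OF \<open>finite S\<close> support[OF \<open>x \<in> S\<close>] drift[OF \<open>x \<in> S\<close>]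
        \<open>0 < h\<close>, of "real s * d"]
    by (simp add: \<phi>_def algebra_simps)
  have "measure M (cylinder xs \<inter> ?H) = (\<Sum>y\<in>S. measure M (cylinder (xs @ [y]) \<inter> ?H))"
    using Suc.prems support \<open>finite S\<close> by (intro measure_cylinder_Int_eq_sum sets_hits) auto
  also have "\<dots> \<le> (\<Sum>y\<in>S. measure M (cylinder xs) * pmf (K x) y * \<phi> s y)"
    using step by (rule sum_mono)
  also have "\<dots> = measure M (cylinder xs) * (\<Sum>y\<in>S. pmf (K x) y * \<phi> s y)"
    by (simp add: sum_distrib_left mult.assoc)
  also have "\<dots> \<le> measure M (cylinder xs) * \<phi> (Suc s) x"
    using expect by (intro mult_left_mono) auto
  finally show ?case
    by (simp add: \<phi>_def x_def)
qed

lemma prob_hits_le: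
  fixes q :: "nat \<Rightarrow> real"
  assumes "finite S" and "\<And>x. x \<in> S \<Longrightarrow> set_pmf (K x) \<subseteq> S"
    and "\<And>y. 0 \<le> q y"
    and "\<And>x. x \<in> S \<Longrightarrow> measure_pmf.expectation (K x) q \<le> q x + d" and "0 \<le> d"
    and "\<And>y. y \<in> B \<Longrightarrow> h \<le> q y" and "0 < h"
    and start: "\<And>\<omega>. \<omega> \<in> space M \<Longrightarrow> X 0 \<omega> = x0" and "x0 \<in> S"
  shows "measure M (hits B {1..t}) \<le> (real t * d + q x0) / h"
proof -
  have "cylinder [x0] = space M"
    using start by (auto simp: cylinder_def)
  moreover have "{length [x0]..<length [x0] + t} = {1..t}"
    by auto
  moreover have "hits B {1..t} \<subseteq> space M"
    by (auto simp: hits_def)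
  ultimately show ?thesis
    using measure_cylinder_Int_hits_le[of S q d B h "[x0]" t] assms
    by (simp add: Int_absorb1 prob_space)
qed

end

theorem lemma6:
  fixes M :: "'w measure" and X :: "nat \<Rightarrow> 'w \<Rightarrow> nat"
    and mu lam x0 t :: nat and \<Delta> :: real
  assumes "prob_space M"
    and "0 < mu" and "0 < lam" and "exp 1 * real mu \<le> real lam"
    and "1 \<le> x0" and "x0 \<le> mu"
    and meas: "\<And>s. X s \<in> measurable M (count_space UNIV)"
    and init: "\<And>\<omega>. \<omega> \<in> space M \<Longrightarrow> X 0 \<omega> = x0"
    and trans: "\<And>s xs y. 1 \<le> s \<Longrightarrow> length xs = s \<Longrightarrow>
        measure M {\<omega> \<in> space M. (\<forall>i<s. X i \<omega> = xs ! i) \<and> X s \<omega> = y}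
        = measure M {\<omega> \<in> space M. \<forall>i<s. X i \<omega> = xs ! i}
          * pmf (step_law mu lam (xs ! (s - 1))) y"
    and "0 < \<Delta>"
  shows "measure M {\<omega> \<in> space M. \<exists>\<tau>\<in>{1..t}. real (X \<tau> \<omega>) < real x0 - \<Delta>}
         \<le> real t * real x0 / \<Delta>\<^sup>2"
proof -
  interpret nat_markov_chain M X "step_law mu lam"
    using assms(1) meas trans by (simp add: nat_markov_chain_def nat_markov_chain_axioms_def)
  define q where "q y = (max 0 (real x0 - real y))\<^sup>2" for y :: nat
  define B where "B = {y :: nat. real y < real x0 - \<Delta>}"
  have "q y \<ge> \<Delta>\<^sup>2" if "y \<in> B" for y
    using that \<open>0 < \<Delta>\<close> unfolding q_def B_def by (intro power_mono) auto
  moreover have "measure_pmf.expectation (step_law mu lam x) q \<le> q x + real x0" if "x \<in> {..mu}" for x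
    using that assms(4-6) unfolding q_def by (intro expectation_step_law_shortfall_square_le) auto
  ultimately have "measure M (hits B {1..t}) \<le> (real t * real x0 + q x0) / \<Delta>\<^sup>2"
    using set_pmf_step_law init \<open>0 < \<Delta>\<close> \<open>x0 \<le> mu\<close>
    by (intro prob_hits_le[where S = "{..mu}"]) (auto simp: q_def[abs_def])
  then show ?thesis
    by (simp add: hits_def B_def q_def)
qed

end
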